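(* Let $\mathbb{F}$ be a field, $d\geq3$ and $V$ a vector space over $\mathbb{F}$ of dimension $d+1$. Let $E^*_0,\dots,E^*_d$ be a system of mutually orthogonal idempotents in $\mathrm{End}(V)$ and $A\in\mathrm{End}(V)$ with $E^*_iAE^*_j=0$ if $|i-j|>1$ and $E^*_iAE^*_j\neq0$ if $|i-j|=1$, with $A$ multiplicity-free and bipartite. Let $\theta^*_0,\dots,\theta^*_d\in\mathbb{F}$ be mutually distinct and $A^*=\sum_i\theta^*_iE^*_i$. Fix an integer $i$ with $3\le i\le d$ and assume that $\dfrac{\theta^*_j-\theta^*_{j-3}}{\theta^*_{j-1}-\theta^*_{j-2}}$ is independent of $j$ for $3\le j\le i$ (equivalently, that $\dfrac{\theta^*_j+\theta^*_{j-1}+\theta^*_{j-2}-\theta^*_h-\theta^*_{h-1}-\theta^*_{h-2}}{\theta^*_{j-1}-\theta^*_{h-1}}$ is independent of $j,h$ for $2\le h<j\le i$). Then $$\frac{\theta^*_{i-2}-\theta^*_2}{\theta^*_{i-1}-\theta^*_1}=\frac{\theta^*_{i-1}-\theta^*_3}{\theta^*_i-\theta^*_2}.$$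
   Context: A system of mutually orthogonal idempotents: $E^*_iE^*_j=\delta_{ij}E^*_i$, $\operatorname{rank}E^*_i=1$. $A$ multiplicity-free: $d+1$ distinct eigenvalues in $\mathbb{F}$. Bipartite: $\operatorname{tr}(E^*_iA)=0$ for all $i$. *)

theory Defs
  imports "Jordan_Normal_Form.DL_Rank" "Jordan_Normal_Form.Char_Poly"
begin

definition mat_trace :: "'a::comm_ring_1 mat \<Rightarrow> 'a" where
  "mat_trace M = (\<Sum>k<dim_row M. M $$ (k, k))"

definition mat_sum :: "nat \<Rightarrow> 'b set \<Rightarrow> ('b \<Rightarrow> 'a::comm_monoid_add mat) \<Rightarrow> 'a mat" where
  "mat_sum n J f = mat n n (\<lambda>rc. \<Sum>j\<in>J. f j $$ rc)"

end

theory Submission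
  imports Defs
begin

text \<open>Only the distinctness of the values \<theta>(j) matters. The constant-ratio hypothesis is the
  linear recurrence \<theta>(n+3) - \<theta>(n) = \<beta> (\<theta>(n+2) - \<theta>(n+1)), which has the first integral
  \<theta>(k+2) - (\<beta> - 1) \<theta>(k+1) + \<theta>(k). Along such a sequence the cross product
  (\<theta>(n+2) - \<theta>(1)) (\<theta>(n+2) - \<theta>(3)) - (\<theta>(n+1) - \<theta>(2)) (\<theta>(n+3) - \<theta>(2)) changes by
  (\<theta>(n+3) - \<theta>(n+2)) times a difference of two values of the first integral, so it stays 0;
  for n = i - 3 this is the claimed equality of ratios with denominators cleared.\<close>

lemma recurrence_first_integral:
  fixes th :: "nat \<Rightarrow> 'a::comm_ring_1"
  assumes rec: "\<And>n. n + 3 \<le> i \<Longrightarrow> th (n+3) - th n = b * (th (n+2) - th (n+1))"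
    and "k + 2 \<le> i"
  shows "th (k+2) - (b-1) * th (k+1) + th k = th 2 - (b-1) * th 1 + th 0"
  using \<open>k + 2 \<le> i\<close>
proof (induction k)
  case 0
  then show ?case by (simp add: numeral_eq_Suc)
next
  case (Suc k)
  have "th (k+3) - th k = b * (th (k+2) - th (k+1))"
    using rec Suc.prems by simp
  then have "th (k+3) - (b-1) * th (k+2) + th (k+1) = th (k+2) - (b-1) * th (k+1) + th k"
    by (simp add: algebra_simps)
  with Suc show ?case by (simp add: numeral_eq_Suc)
qed

lemma recurrence_cross_product_eq:
  fixes th :: "nat \<Rightarrow> 'a::comm_ring_1"
  assumes rec: "\<And>n. n + 3 \<le> i \<Longrightarrow> th (n+3) - th n = b * (th (n+2) - th (n+1))"
    and "n + 3 \<le> i"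
  shows "(th (n+2) - th 1) * (th (n+2) - th 3) = (th (n+1) - th 2) * (th (n+3) - th 2)"
  using \<open>n + 3 \<le> i\<close>
proof (induction n)
  case 0
  then show ?case by (simp add: algebra_simps numeral_eq_Suc)
next
  case (Suc n)
  define H where "H k = th (k+2) - (b-1) * th (k+1) + th k" for k
  have "H (n+1) = H 0" "H 1 = H 0"
    using recurrence_first_integral[of i th b, OF rec] Suc.prems
    by (simp_all add: H_def)
  then have first_integral_eq: "H (n+1) = H 1" by simp
  have next_term: "th (n+4) = th (n+1) + b * (th (n+3) - th (n+2))"
    using rec[of "n+1"] Suc.prems by (simp add: algebra_simps numeral_eq_Suc)
  have "(th (n+3) - th 1) * (th (n+3) - th 3) - (th (n+2) - th 2) * (th (n+4) - th 2)
      - ((th (n+2) - th 1) * (th (n+2) - th 3) - (th (n+1) - th 2) * (th (n+3) - th 2))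
      = (th (n+3) - th (n+2)) * (H (n+1) - H 1)"
    unfolding H_def next_term by (simp add: algebra_simps numeral_eq_Suc)
  with first_integral_eq Suc have
    "(th (n+3) - th 1) * (th (n+3) - th 3) = (th (n+2) - th 2) * (th (n+4) - th 2)"
    by simp
  then show ?case by (simp add: numeral_eq_Suc add.commute)
qed

lemma recurrence_of_constant_ratio:
  fixes th :: "nat \<Rightarrow> 'a::field"
  assumes inj: "inj_on th {0..d}" and "i \<le> d"
    and ratio: "\<And>j. 3 \<le> j \<Longrightarrow> j \<le> i \<Longrightarrow> (th j - th (j-3)) / (th (j-1) - th (j-2)) = b"
    and "n + 3 \<le> i"
  shows "th (n+3) - th n = b * (th (n+2) - th (n+1))"
proof -
  have "th (n+2) \<noteq> th (n+1)"
    using inj_onD[OF inj, of "n+2" "n+1"] \<open>n + 3 \<le> i\<close> \<open>i \<le> d\<close> by auto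
  moreover have "(th (n+3) - th n) / (th (n+2) - th (n+1)) = b"
    using ratio[of "n+3"] \<open>n + 3 \<le> i\<close> by simp
  ultimately show ?thesis by (simp add: field_simps)
qed

theorem lemma9p3:
  fixes d i :: nat
    and E :: "nat \<Rightarrow> 'a::field mat"
    and A Astar :: "'a mat"
    and th :: "nat \<Rightarrow> 'a"
  assumes d3: "d \<ge> 3"
    and E_carrier: "\<And>j. j \<le> d \<Longrightarrow> E j \<in> carrier_mat (d+1) (d+1)"
    and E_orth: "\<And>j k. j \<le> d \<Longrightarrow> k \<le> d \<Longrightarrow>
                   E j * E k = (if j = k then E j else 0\<^sub>m (d+1) (d+1))"
    and E_rank: "\<And>j. j \<le> d \<Longrightarrow> vec_space.rank (d+1) (E j) = 1"
    and A_carrier: "A \<in> carrier_mat (d+1) (d+1)"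
    and A_zero: "\<And>j k. j \<le> d \<Longrightarrow> k \<le> d \<Longrightarrow> j + 1 < k \<or> k + 1 < j \<Longrightarrow>
                   E j * A * E k = 0\<^sub>m (d+1) (d+1)"
    and A_nonzero: "\<And>j k. j \<le> d \<Longrightarrow> k \<le> d \<Longrightarrow> j + 1 = k \<or> k + 1 = j \<Longrightarrow>
                   E j * A * E k \<noteq> 0\<^sub>m (d+1) (d+1)"
    and A_mult_free: "card {t. eigenvalue A t} = d + 1"
    and A_bipartite: "\<And>j. j \<le> d \<Longrightarrow> mat_trace (E j * A) = 0"
    and th_distinct: "inj_on th {0..d}"
    and Astar_def: "Astar = mat_sum (d+1) {0..d} (\<lambda>j. th j \<cdot>\<^sub>m E j)"
    and i_range: "3 \<le> i" "i \<le> d"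
    and const_ratio: "\<exists>\<beta>. \<forall>j. 3 \<le> j \<and> j \<le> i \<longrightarrow>
                   (th j - th (j-3)) / (th (j-1) - th (j-2)) = \<beta>"
  shows "(th (i-2) - th 2) / (th (i-1) - th 1) = (th (i-1) - th 3) / (th i - th 2)"
proof -
  obtain b where "\<And>j. 3 \<le> j \<Longrightarrow> j \<le> i \<Longrightarrow> (th j - th (j-3)) / (th (j-1) - th (j-2)) = b"
    using const_ratio by blast
  from recurrence_cross_product_eq[of i th b "i-3",
      OF recurrence_of_constant_ratio[OF th_distinct \<open>i \<le> d\<close> this]]
  have "(th (i-1) - th 1) * (th (i-1) - th 3) = (th (i-2) - th 2) * (th i - th 2)"
    using i_range by (simp add: numeral_eq_Suc Suc_diff_Suc)
  moreover have "th (i-1) \<noteq> th 1" "th i \<noteq> th 2"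
    using inj_on_contraD[OF th_distinct, of "i-1" 1] inj_on_contraD[OF th_distinct, of i 2]
      i_range by auto
  ultimately show ?thesis by (simp add: field_simps)
qed

end
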